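(* Let $G=(V,E)$ be a graph with a string representation $\varphi$ in the plane, let $D\subseteq V$, and let $R\subseteq\mathbb{R}^2$ be a region. If $\pi$ is a shortest curve relative to $D$ and $\pi'\subseteq R$ is a sub-curve of $\pi$, then $\pi'$ is a shortest curve relative to $D\cap V|_R$ in $G|_R$ with representation $\varphi|_R$.
   Context: A string representation assigns to each vertex $v$ a bounded curve $\varphi(v)\subseteq\mathbb{R}^2$ with distinct $u,v$ adjacent iff the curves intersect; representations are assumed to have finitely many intersection points, no touching, no triple points, no self-intersections. Faces of the representation are the arc-connected components of the complement of all strings; a region is the closure of a union of some faces. For a closed region $R$, $G|_R=(V|_R,E|_R)$ is the intersection graph of the arc-connected components of the sets $\varphi(v)\cap R$ (each such component is a new vertex, a split of $v$), with representation $\varphi|_R$ given by these components. A path $P$ is a shortest path relative to $D$ if it is shortest in $G[P\cup D]$. For such $P$ from $u$ to $v$ and points $A\in\varphi(u)$, $B\in\varphi(v)$, a curve $\pi\subseteq\bigcup_{p\in P}\varphi(p)$ from $A$ to $B$ whose intersection with each $\varphi(p)$ is connected, these intersections occurring along $\pi$ in the order of $P$, is a shortest curve of $P$ relative to $D$; a shortest curve relative to $D$ is one for some shortest path relative to $D$. *)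

theory Defs
  imports "HOL-Analysis.Analysis"
begin

type_synonym point = "real^2"

definition adj :: "('v \<Rightarrow> point set) \<Rightarrow> 'v \<Rightarrow> 'v \<Rightarrow> bool" where
  "adj \<phi> u v \<longleftrightarrow> u \<noteq> v \<and> \<phi> u \<inter> \<phi> v \<noteq> {}"

text \<open>Two strings cross at p (no touching): locally homeomorphic to two
  perpendicular diameters of a disc.\<close>
definition crosses_at :: "point set \<Rightarrow> point set \<Rightarrow> point \<Rightarrow> bool" where
  "crosses_at A B p \<longleftrightarrow>
     (\<exists>(U::point set) (f::point \<Rightarrow> point) f'. open U \<and> p \<in> U \<and> homeomorphism U (ball 0 1) f f' \<and> f p = 0 \<and>
        f ` (A \<inter> U) = {x \<in> ball 0 1. x $ 2 = 0} \<and>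
        f ` (B \<inter> U) = {x \<in> ball 0 1. x $ 1 = 0})"

definition string_rep :: "'v set \<Rightarrow> ('v \<Rightarrow> point set) \<Rightarrow> bool" where
  "string_rep V \<phi> \<longleftrightarrow>
     finite V \<and>
     (\<forall>v\<in>V. \<exists>g. arc g \<and> \<phi> v = path_image g) \<and>
     finite (\<Union>{\<phi> u \<inter> \<phi> v | u v. u \<in> V \<and> v \<in> V \<and> u \<noteq> v}) \<and>
     (\<forall>u\<in>V. \<forall>v\<in>V. \<forall>w\<in>V. u \<noteq> v \<and> v \<noteq> w \<and> u \<noteq> w \<longrightarrow> \<phi> u \<inter> \<phi> v \<inter> \<phi> w = {}) \<and>
     (\<forall>u\<in>V. \<forall>v\<in>V. \<forall>p. u \<noteq> v \<and> p \<in> \<phi> u \<inter> \<phi> v \<longrightarrow> crosses_at (\<phi> u) (\<phi> v) p)"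

definition faces :: "'v set \<Rightarrow> ('v \<Rightarrow> point set) \<Rightarrow> point set set" where
  "faces V \<phi> = {path_component_set (- \<Union>(\<phi> ` V)) x | x. x \<notin> \<Union>(\<phi> ` V)}"

definition region :: "'v set \<Rightarrow> ('v \<Rightarrow> point set) \<Rightarrow> point set \<Rightarrow> bool" where
  "region V \<phi> R \<longleftrightarrow> (\<exists>F. F \<subseteq> faces V \<phi> \<and> R = closure (\<Union>F))"

text \<open>Restriction G|_R: vertices are splits (v, C), C an arc-connected component
  of \<phi> v \<inter> R; the representation \<phi>|_R is snd.\<close>
definition restr_V :: "'v set \<Rightarrow> ('v \<Rightarrow> point set) \<Rightarrow> point set \<Rightarrow> ('v \<times> point set) set" where
  "restr_V V \<phi> R = {(v, path_component_set (\<phi> v \<inter> R) x) | v x. v \<in> V \<and> x \<in> \<phi> v \<inter> R}"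

definition restr_rep :: "('v \<times> point set) \<Rightarrow> point set" where
  "restr_rep s = snd s"

definition restr_D :: "'v set \<Rightarrow> ('v \<Rightarrow> point set) \<Rightarrow> point set \<Rightarrow> 'v set \<Rightarrow> ('v \<times> point set) set" where
  "restr_D V \<phi> R D = {s \<in> restr_V V \<phi> R. fst s \<in> D}"

definition walk_in :: "'v set \<Rightarrow> ('v \<Rightarrow> 'v \<Rightarrow> bool) \<Rightarrow> 'v list \<Rightarrow> bool" where
  "walk_in S E P \<longleftrightarrow> P \<noteq> [] \<and> set P \<subseteq> S \<and> (\<forall>i. Suc i < length P \<longrightarrow> E (P ! i) (P ! Suc i))"

definition shortest_path_rel :: "'v set \<Rightarrow> ('v \<Rightarrow> point set) \<Rightarrow> 'v set \<Rightarrow> 'v list \<Rightarrow> bool" where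
  "shortest_path_rel V \<phi> D P \<longleftrightarrow>
     walk_in V (adj \<phi>) P \<and>
     (\<forall>Q. walk_in (set P \<union> (D \<inter> V)) (adj \<phi>) Q \<and> hd Q = hd P \<and> last Q = last P
          \<longrightarrow> length P \<le> length Q)"

definition shortest_curve_of :: "'v set \<Rightarrow> ('v \<Rightarrow> point set) \<Rightarrow> 'v set \<Rightarrow> 'v list \<Rightarrow> (real \<Rightarrow> point) \<Rightarrow> bool" where
  "shortest_curve_of V \<phi> D P g \<longleftrightarrow>
     shortest_path_rel V \<phi> D P \<and> path g \<and>
     pathstart g \<in> \<phi> (hd P) \<and> pathfinish g \<in> \<phi> (last P) \<and>
     path_image g \<subseteq> \<Union>(\<phi> ` set P) \<and>
     (\<forall>p\<in>set P. path_image g \<inter> \<phi> p \<noteq> {} \<and> connected (path_image g \<inter> \<phi> p)) \<and>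
     (\<forall>i j s t. i < j \<and> j < length P \<and> s \<in> {0..1} \<and> t \<in> {0..1} \<and>
        g s \<in> \<phi> (P ! i) \<and> g t \<in> \<phi> (P ! j) \<longrightarrow> s \<le> t)"

definition shortest_curve_rel :: "'v set \<Rightarrow> ('v \<Rightarrow> point set) \<Rightarrow> 'v set \<Rightarrow> (real \<Rightarrow> point) \<Rightarrow> bool" where
  "shortest_curve_rel V \<phi> D g \<longleftrightarrow> (\<exists>P. shortest_curve_of V \<phi> D P g)"

end

theory Submission
  imports Defs
begin

text \<open>
  Along a shortest curve g of P the strings P!0, P!1, ... are visited in this order. Hence the
  parameters in [a, b] at which g lies on P!i form an interval, nonempty exactly for the indices
  k..m between the strings through g a and g b, and consecutive intervals share a parameter because
  g ` [a, b] is connected and the strings are closed. So the sub-curve meets each P!i in one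
  path-connected set, lying in a single split of P!i in G|_R, and these splits form a path P' of G|_R
  along which the sub-curve is ordered. A shorter path of G|_R between the ends of P' would
  project to a walk in G[P \<union> D] and, spliced into P, give a path shorter than P.
\<close>

definition ordered_along :: "('v \<Rightarrow> 'a set) \<Rightarrow> 'v list \<Rightarrow> (real \<Rightarrow> 'a) \<Rightarrow> bool" where
  "ordered_along \<phi> P g \<longleftrightarrow>
     (\<forall>i j s t. i < j \<and> j < length P \<and> s \<in> {0..1} \<and> t \<in> {0..1} \<and>
        g s \<in> \<phi> (P ! i) \<and> g t \<in> \<phi> (P ! j) \<longrightarrow> s \<le> t)"

lemma shortest_curve_of_iff:
  "shortest_curve_of V \<phi> D P g \<longleftrightarrow>
     shortest_path_rel V \<phi> D P \<and> path g \<and>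
     pathstart g \<in> \<phi> (hd P) \<and> pathfinish g \<in> \<phi> (last P) \<and>
     path_image g \<subseteq> \<Union>(\<phi> ` set P) \<and>
     (\<forall>p\<in>set P. path_image g \<inter> \<phi> p \<noteq> {} \<and> connected (path_image g \<inter> \<phi> p)) \<and>
     ordered_along \<phi> P g"
  by (simp add: shortest_curve_of_def ordered_along_def)

lemma ordered_along_length_le_1: "length P \<le> 1 \<Longrightarrow> ordered_along \<phi> P g"
  by (simp add: ordered_along_def)

lemma ordered_along_subpath:
  assumes "ordered_along \<phi> P g" "0 \<le> a" "a < b" "b \<le> 1"
    and "\<And>i. i < length Q \<Longrightarrow> k + i < length P \<and> \<psi> (Q ! i) \<subseteq> \<phi> (P ! (k + i))"
  shows "ordered_along \<psi> Q (subpath a b g)"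
  unfolding ordered_along_def
proof (intro allI impI, elim conjE)
  fix i j s t
  assume ij: "i < j" "j < length Q" and st: "s \<in> {0..1}" "t \<in> {0..1}"
    and gs: "subpath a b g s \<in> \<psi> (Q ! i)" and gt: "subpath a b g t \<in> \<psi> (Q ! j)"
  have "(b - a) * x + a \<in> {0..1}" if "x \<in> {0..1}" for x
  proof -
    have "0 \<le> (b - a) * x" "(b - a) * x \<le> b - a"
      using that assms(3) by (auto intro: mult_left_le)
    then show ?thesis using assms(2,4) unfolding atLeastAtMost_iff by linarith
  qed
  with st have "(b - a) * s + a \<in> {0..1}" "(b - a) * t + a \<in> {0..1}" by auto
  moreover have "g ((b - a) * s + a) \<in> \<phi> (P ! (k + i))" "g ((b - a) * t + a) \<in> \<phi> (P ! (k + j))"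
    using gs gt assms(5)[of i] assms(5)[of j] ij by (auto simp: subpath_def)
  ultimately have "(b - a) * s + a \<le> (b - a) * t + a"
    using assms(1) assms(5)[of j] ij unfolding ordered_along_def by (meson add_less_cancel_left)
  then show "s \<le> t" using assms(3) by simp
qed

lemma walk_in_iff_successively:
  "walk_in S E P \<longleftrightarrow> P \<noteq> [] \<and> set P \<subseteq> S \<and> successively E P"
  by (simp add: walk_in_def successively_conv_nth)

lemma walk_in_splice:
  assumes P: "walk_in S E P" and Q: "walk_in T E Q"
    and km: "k \<le> m" "m < length P" and ends: "hd Q = P ! k" "last Q = P ! m"
  defines "W \<equiv> take k P @ Q @ drop (Suc m) P"
  shows "walk_in (S \<union> T) E W" and "hd W = hd P" and "last W = last P"
proof -
  have Ps: "successively E P" and Qs: "successively E Q" and "Q \<noteq> []"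
    using P Q by (auto simp: walk_in_iff_successively)
  have step: "E (P ! i) (P ! Suc i)" if "Suc i < length P" for i
    using Ps that successively_nth by blast
  have "successively E (take k P)" "successively E (drop (Suc m) P)"
    using Ps by (auto simp: successively_conv_nth)
  moreover have "drop (Suc m) P \<noteq> [] \<Longrightarrow> E (last Q) (hd (drop (Suc m) P))"
    using step[of m] ends by (simp add: hd_drop_conv_nth)
  ultimately have "successively E (Q @ drop (Suc m) P)"
    using Qs by (auto simp: successively_append_iff)
  moreover have "take k P \<noteq> [] \<Longrightarrow> E (last (take k P)) (hd Q)"
    using step[of "k - 1"] km ends by (auto simp: last_conv_nth min_def)
  ultimately have "successively E W"
    using \<open>successively E (take k P)\<close> \<open>Q \<noteq> []\<close> by (auto simp: W_def successively_append_iff)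
  moreover have "set W \<subseteq> S \<union> T"
    using P Q by (auto simp: W_def walk_in_def dest: in_set_takeD in_set_dropD)
  ultimately show "walk_in (S \<union> T) E W"
    using \<open>Q \<noteq> []\<close> by (simp add: walk_in_iff_successively W_def)
  show "hd W = hd P"
    using \<open>Q \<noteq> []\<close> ends P by (cases k) (auto simp: W_def walk_in_def hd_conv_nth[of P])
  show "last W = last P"
  proof (cases "Suc m = length P")
    case True
    then have "last P = P ! m"
      by (metis diff_Suc_1 last_conv_nth list.size(3) nat.distinct(1))
    then show ?thesis using True \<open>Q \<noteq> []\<close> ends by (simp add: W_def)
  next
    case False
    then show ?thesis using km by (simp add: W_def)
  qed
qed

lemma shortest_walk_segment:
  assumes P: "walk_in T E P"
    and shortest: "\<And>W. walk_in T E W \<Longrightarrow> hd W = hd P \<Longrightarrow> last W = last P \<Longrightarrow> length P \<le> length W"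
    and km: "k \<le> m" "m < length P"
    and Q: "walk_in T E Q" "hd Q = P ! k" "last Q = P ! m"
  shows "Suc m - k \<le> length Q"
proof -
  have "length P \<le> length (take k P @ Q @ drop (Suc m) P)"
    using walk_in_splice[OF P Q(1) km Q(2,3)] by (intro shortest) simp_all
  then show ?thesis using km by simp
qed

lemma string_rep_closed: "string_rep V \<phi> \<Longrightarrow> v \<in> V \<Longrightarrow> closed (\<phi> v)"
  unfolding string_rep_def by (metis arc_imp_path closed_path_image)

lemma adj_restr_rep_imp_adj:
  assumes "x \<in> restr_V V \<phi> R" "y \<in> restr_V V \<phi> R" "adj restr_rep x y"
  shows "adj \<phi> (fst x) (fst y)"
proof -
  obtain v p where x: "x = (v, path_component_set (\<phi> v \<inter> R) p)"
    using assms(1) by (auto simp: restr_V_def)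
  obtain w q where y: "y = (w, path_component_set (\<phi> w \<inter> R) q)"
    using assms(2) by (auto simp: restr_V_def)
  obtain z where z: "z \<in> snd x" "z \<in> snd y"
    using assms(3) by (auto simp: adj_def restr_rep_def)
  have "v \<noteq> w"
  proof
    assume "v = w"
    then have "snd x = snd y" using z x y by (metis path_component_eq snd_conv)
    then show False using assms(3) x y \<open>v = w\<close> by (auto simp: adj_def restr_rep_def)
  qed
  moreover have "z \<in> \<phi> v" "z \<in> \<phi> w" using z x y path_component_subset by fastforce+
  ultimately show ?thesis using x y by (auto simp: adj_def)
qed

lemma walk_in_restr_map_fst:
  assumes "walk_in S (adj restr_rep) Q" "S \<subseteq> restr_V V \<phi> R"
  shows "walk_in (fst ` S) (adj \<phi>) (map fst Q)"
proof -
  have "adj \<phi> (fst (Q ! i)) (fst (Q ! Suc i))" if "Suc i < length Q" for i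
  proof (rule adj_restr_rep_imp_adj)
    have "Q ! i \<in> set Q" "Q ! Suc i \<in> set Q" using that by simp_all
    then show "Q ! i \<in> restr_V V \<phi> R" "Q ! Suc i \<in> restr_V V \<phi> R"
      using assms by (auto simp: walk_in_def)
    show "adj restr_rep (Q ! i) (Q ! Suc i)" using assms(1) that by (simp add: walk_in_def)
  qed
  then show ?thesis using assms(1) by (auto simp: walk_in_def)
qed

locale ordered_curve =
  fixes \<phi> :: "'v \<Rightarrow> 'a::topological_space set" and P :: "'v list" and g :: "real \<Rightarrow> 'a"
  assumes path_g: "path g"
    and image_covered: "path_image g \<subseteq> \<Union>(\<phi> ` set P)"
    and strings_met: "\<And>v. v \<in> set P \<Longrightarrow> path_image g \<inter> \<phi> v \<noteq> {}"
    and ordered: "ordered_along \<phi> P g"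
    and strings_closed: "\<And>v. v \<in> set P \<Longrightarrow> closed (\<phi> v)"
begin

lemma ordered_le:
  "i < j \<Longrightarrow> j < length P \<Longrightarrow> s \<in> {0..1} \<Longrightarrow> t \<in> {0..1} \<Longrightarrow>
    g s \<in> \<phi> (P ! i) \<Longrightarrow> g t \<in> \<phi> (P ! j) \<Longrightarrow> s \<le> t"
  using ordered unfolding ordered_along_def by blast

lemma index_mono:
  assumes "s < t" "s \<in> {0..1}" "t \<in> {0..1}" "i < length P"
    and "g s \<in> \<phi> (P ! i)" "g t \<in> \<phi> (P ! j)"
  shows "i \<le> j"
proof (rule ccontr)
  assume "\<not> i \<le> j"
  then have "t \<le> s" using ordered_le[of j i t s] assms by simp
  then show False using assms(1) by simp
qed

lemma obtain_covering_index:
  assumes "u \<in> {0..1}" obtains j where "j < length P" "g u \<in> \<phi> (P ! j)"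
proof -
  have "g u \<in> path_image g" using assms by (simp add: path_image_def)
  then have "g u \<in> \<Union>(\<phi> ` set P)" using image_covered by blast
  then show thesis using that by (metis UN_E in_set_conv_nth)
qed

lemma obtain_param_in_string:
  assumes "i < length P" obtains t where "t \<in> {0..1}" "g t \<in> \<phi> (P ! i)"
proof -
  obtain x where "x \<in> path_image g" "x \<in> \<phi> (P ! i)" using assms strings_met[of "P ! i"] by auto
  then show thesis using that unfolding path_image_def by blast
qed

lemma pinned_between:
  assumes "j \<le> i" "i \<le> j'" "j' < length P" "u \<in> {0..1}"
    and "g u \<in> \<phi> (P ! j)" "g u \<in> \<phi> (P ! j')"
  shows "g u \<in> \<phi> (P ! i)"
proof (cases "j = i \<or> i = j'")
  case True
  then show ?thesis using assms by auto
next
  case False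
  have "i < length P" using assms by simp
  then obtain t where t: "t \<in> {0..1}" "g t \<in> \<phi> (P ! i)" by (rule obtain_param_in_string)
  have "u \<le> t" using False assms t by (intro ordered_le[of j i u t]) auto
  moreover have "t \<le> u" using False assms t by (intro ordered_le[of i j' t u]) auto
  ultimately show ?thesis using t by simp
qed

lemma obtain_end_indices:
  assumes "a \<in> {0..1}" "b \<in> {0..1}" "a \<le> b"
  obtains k m where "k \<le> m" "m < length P" "g a \<in> \<phi> (P ! k)" "g b \<in> \<phi> (P ! m)" "k < m \<Longrightarrow> a < b"
proof -
  obtain k where k: "k < length P" "g a \<in> \<phi> (P ! k)" using obtain_covering_index assms by blast
  obtain m where m: "m < length P" "g b \<in> \<phi> (P ! m)" using obtain_covering_index assms by blast
  show thesis
  proof (cases "a = b")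
    case True
    then show ?thesis using that[of k k] k by simp
  next
    case False
    then have "a < b" using assms by simp
    then show ?thesis using that[of k m] k m assms index_mono[of a b k m] by blast
  qed
qed

end

locale ordered_curve_segment = ordered_curve +
  fixes a b :: real and k m :: nat and R
  assumes params: "0 \<le> a" "a \<le> b" "b \<le> 1"
    and indices: "k \<le> m" "m < length P"
    and start_in: "g a \<in> \<phi> (P ! k)" and finish_in: "g b \<in> \<phi> (P ! m)"
    and ends_distinct: "k < m \<Longrightarrow> a < b"
      \<comment> \<open>a constant sub-curve (a = b) is ordered only along a one-vertex path\<close>
    and segment_in_region: "g ` {a..b} \<subseteq> R"
begin

lemma segment_subset_unit: "{a..b} \<subseteq> {0..1}"
  using params by auto

definition piece :: "nat \<Rightarrow> real set" where
  "piece i = {a..b} \<inter> g -` \<phi> (P ! i)"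

lemma piece_interval:
  assumes "i < length P" shows "is_interval (piece i)"
  unfolding is_interval_1
proof (intro ballI allI impI, elim conjE)
  fix s t u assume s: "s \<in> piece i" and t: "t \<in> piece i" and u: "s \<le> u" "u \<le> t"
  have "u \<in> {a..b}" using s t u by (auto simp: piece_def)
  then obtain j where j: "j < length P" "g u \<in> \<phi> (P ! j)"
    using obtain_covering_index segment_subset_unit by blast
  have "s \<in> {0..1}" "t \<in> {0..1}" "u \<in> {0..1}"
    using s t \<open>u \<in> {a..b}\<close> segment_subset_unit by (auto simp: piece_def)
  have "g u \<in> \<phi> (P ! i)"
  proof (cases j i rule: linorder_cases)
    case less
    then have "u \<le> s"
      using ordered_le[of j i u s] assms j s \<open>s \<in> {0..1}\<close> \<open>u \<in> {0..1}\<close> by (simp add: piece_def)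
    then show ?thesis using u s by (auto simp: piece_def)
  next
    case greater
    then have "t \<le> u"
      using ordered_le[of i j t u] j t \<open>t \<in> {0..1}\<close> \<open>u \<in> {0..1}\<close> by (simp add: piece_def)
    then show ?thesis using u t by (auto simp: piece_def)
  qed (use j in simp)
  then show "u \<in> piece i" using \<open>u \<in> {a..b}\<close> by (simp add: piece_def)
qed

lemma piece_nonempty:
  assumes "k \<le> i" "i \<le> m" shows "piece i \<noteq> {}"
proof (cases "i = k \<or> i = m")
  case True
  then show ?thesis using start_in finish_in params by (auto simp: piece_def)
next
  case False
  have "i < length P" using assms indices by simp
  then obtain t where t: "t \<in> {0..1}" "g t \<in> \<phi> (P ! i)" by (rule obtain_param_in_string)
  have "a \<le> t" using False assms indices params t start_in by (intro ordered_le[of k i a t]) auto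
  moreover have "t \<le> b" using False assms indices params t finish_in by (intro ordered_le[of i m t b]) auto
  ultimately show ?thesis using t by (auto simp: piece_def)
qed

lemma piece_index:
  assumes "u \<in> {a..b}" obtains i where "k \<le> i" "i \<le> m" "u \<in> piece i"
proof -
  obtain j where j: "j < length P" "g u \<in> \<phi> (P ! j)"
    using obtain_covering_index segment_subset_unit assms by blast
  have u01: "u \<in> {0..1}" using assms segment_subset_unit by blast
  consider "j < k" | "m < j" | "k \<le> j" "j \<le> m" by linarith
  then show thesis
  proof cases
    case 1
    then have "u \<le> a" using ordered_le[of j k u a] j u01 params indices start_in by simp
    then show thesis using that[of k] assms indices start_in by (simp add: piece_def)
  next
    case 2
    then have "b \<le> u" using ordered_le[of m j b u] j u01 params finish_in by simp
    then show thesis using that[of m] assms indices finish_in by (simp add: piece_def)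
  next
    case 3
    then show thesis using that[of j] assms j by (simp add: piece_def)
  qed
qed

lemma consecutive_pieces_meet:
  assumes "k \<le> i" "i < m" shows "piece i \<inter> piece (Suc i) \<noteq> {}"
proof -
  \<comment> \<open>The connected set g ` {a..b} meets both closed sets A and B, hence their intersection,
    and the ordering forces such a meeting point onto both P!i and P!Suc i.\<close>
  define A where "A = (\<Union>j\<in>{..i}. \<phi> (P ! j))"
  define B where "B = (\<Union>j\<in>{Suc i..<length P}. \<phi> (P ! j))"
  have "closed A" "closed B"
    using assms indices strings_closed by (auto simp: A_def B_def intro!: closed_UN)
  moreover have "g ` {a..b} \<subseteq> A \<union> B"
  proof
    fix x assume "x \<in> g ` {a..b}"
    then obtain u where "u \<in> {a..b}" "x = g u" by blast
    then obtain j where "j < length P" "x \<in> \<phi> (P ! j)"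
      using obtain_covering_index segment_subset_unit by blast
    then show "x \<in> A \<union> B" by (cases "j \<le> i") (auto simp: A_def B_def)
  qed
  moreover have "g a \<in> A \<inter> g ` {a..b}" "g b \<in> B \<inter> g ` {a..b}"
    using assms indices params start_in finish_in by (auto simp: A_def B_def)
  moreover have "connected (g ` {a..b})"
    using path_g segment_subset_unit unfolding path_def
    by (intro connected_continuous_image) (auto intro: continuous_on_subset)
  ultimately obtain u where u: "u \<in> {a..b}" "g u \<in> A" "g u \<in> B"
    unfolding connected_closed by blast
  then obtain j j' where j: "j \<le> i" "g u \<in> \<phi> (P ! j)" and j': "Suc i \<le> j'" "j' < length P" "g u \<in> \<phi> (P ! j')"
    by (auto simp: A_def B_def)
  have "u \<in> {0..1}" using u segment_subset_unit by blast
  then have "g u \<in> \<phi> (P ! i)" "g u \<in> \<phi> (P ! Suc i)"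
    using pinned_between j j' by (meson Suc_leD le_SucI)+
  then show ?thesis using u by (auto simp: piece_def)
qed

text \<open>Any parameter of the nonempty piece selects the same component, as the image of the piece
  is path-connected.\<close>

definition component where
  "component i = path_component_set (\<phi> (P ! i) \<inter> R) (g (SOME t. t \<in> piece i))"

lemma path_connected_piece_image:
  assumes "i < length P" shows "path_connected (g ` piece i)"
proof (rule path_connected_continuous_image)
  show "continuous_on (piece i) g"
    using path_g segment_subset_unit unfolding path_def piece_def by (blast intro: continuous_on_subset)
  show "path_connected (piece i)"
    using piece_interval[OF assms] by (rule is_interval_path_connected)
qed

lemma piece_image_subset_component:
  assumes "k \<le> i" "i \<le> m" shows "g ` piece i \<subseteq> component i"
  unfolding component_def
proof (rule path_component_maximal)
  show "g (SOME t. t \<in> piece i) \<in> g ` piece i"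
    using piece_nonempty[OF assms] by (simp add: some_in_eq)
  show "path_connected (g ` piece i)"
    using assms indices by (intro path_connected_piece_image) simp
  show "g ` piece i \<subseteq> \<phi> (P ! i) \<inter> R"
    using segment_in_region by (auto simp: piece_def)
qed

lemma component_subset: "component i \<subseteq> \<phi> (P ! i)"
  unfolding component_def using path_component_subset by blast

lemma segment_inter_component:
  assumes "k \<le> i" "i \<le> m" shows "g ` {a..b} \<inter> component i = g ` piece i"
  using piece_image_subset_component[OF assms] component_subset[of i] by (auto simp: piece_def)

definition restricted_path where
  "restricted_path = map (\<lambda>i. (P ! i, component i)) [k..<Suc m]"

lemma length_restricted_path: "length restricted_path = Suc m - k"
  by (simp add: restricted_path_def del: upt_Suc)

lemma nth_restricted_path:
  "j < length restricted_path \<Longrightarrow> restricted_path ! j = (P ! (k + j), component (k + j))"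
  by (simp add: restricted_path_def del: upt_Suc)

lemma set_restricted_path: "set restricted_path = (\<lambda>i. (P ! i, component i)) ` {k..m}"
  by (auto simp: restricted_path_def)

lemma hd_restricted_path: "hd restricted_path = (P ! k, component k)"
  using indices by (simp add: restricted_path_def upt_rec)

lemma last_restricted_path: "last restricted_path = (P ! m, component m)"
  using indices by (simp add: restricted_path_def Suc_diff_le)

end

locale restricted_segment = ordered_curve_segment \<phi> P g a b k m R
  for \<phi> :: "'v \<Rightarrow> point set" and P g a b k m R +
  fixes V D
  assumes shortest: "shortest_path_rel V \<phi> D P" and D_subset: "D \<subseteq> V"
begin

lemma walk_in_P: "walk_in V (adj \<phi>) P"
  using shortest by (simp add: shortest_path_rel_def)

lemma restricted_path_walk: "walk_in (restr_V V \<phi> R) (adj restr_rep) restricted_path"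
proof -
  have "(P ! i, component i) \<in> restr_V V \<phi> R" if "k \<le> i" "i \<le> m" for i
  proof -
    have "P ! i \<in> V" using walk_in_P that indices by (auto simp: walk_in_def)
    moreover have "(SOME t. t \<in> piece i) \<in> piece i"
      using piece_nonempty[OF that] by (simp add: some_in_eq)
    then have "g (SOME t. t \<in> piece i) \<in> \<phi> (P ! i) \<inter> R"
      using segment_in_region unfolding piece_def by blast
    ultimately show ?thesis unfolding restr_V_def component_def by blast
  qed
  then have "set restricted_path \<subseteq> restr_V V \<phi> R" by (auto simp: set_restricted_path)
  moreover have "adj restr_rep (restricted_path ! j) (restricted_path ! Suc j)"
    if "Suc j < length restricted_path" for j
  proof -
    have i: "k \<le> k + j" "k + j < m" using that by (auto simp: length_restricted_path)
    then obtain u where "u \<in> piece (k + j)" "u \<in> piece (Suc (k + j))"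
      using consecutive_pieces_meet by blast
    then have "g u \<in> component (k + j) \<inter> component (Suc (k + j))"
      using piece_image_subset_component[of "k + j"] piece_image_subset_component[of "Suc (k + j)"] i
      by auto
    moreover have "P ! (k + j) \<noteq> P ! Suc (k + j)"
      using walk_in_P i indices by (auto simp: walk_in_def adj_def)
    ultimately show ?thesis
      using that by (auto simp: nth_restricted_path adj_def restr_rep_def)
  qed
  moreover have "restricted_path \<noteq> []"
    using indices by (simp add: restricted_path_def)
  ultimately show ?thesis by (simp add: walk_in_def)
qed

lemma restricted_path_shortest:
  "shortest_path_rel (restr_V V \<phi> R) restr_rep (restr_D V \<phi> R D) restricted_path"
  unfolding shortest_path_rel_def
proof (intro conjI allI impI restricted_path_walk, elim conjE)
  fix Q
  assume Q: "walk_in (set restricted_path \<union> (restr_D V \<phi> R D \<inter> restr_V V \<phi> R)) (adj restr_rep) Q"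
    and ends: "hd Q = hd restricted_path" "last Q = last restricted_path"
  let ?T = "set P \<union> (D \<inter> V)"
  have "set restricted_path \<subseteq> restr_V V \<phi> R"
    using restricted_path_walk by (simp add: walk_in_def)
  then have "walk_in (fst ` (set restricted_path \<union> (restr_D V \<phi> R D \<inter> restr_V V \<phi> R))) (adj \<phi>) (map fst Q)"
    using Q by (intro walk_in_restr_map_fst) auto
  moreover have "fst ` (set restricted_path \<union> (restr_D V \<phi> R D \<inter> restr_V V \<phi> R)) \<subseteq> ?T"
    using indices D_subset by (auto simp: set_restricted_path restr_D_def)
  ultimately have "walk_in ?T (adj \<phi>) (map fst Q)"
    unfolding walk_in_def by blast
  moreover have "hd (map fst Q) = P ! k" "last (map fst Q) = P ! m"
    using Q ends by (auto simp: walk_in_def hd_map last_map hd_restricted_path last_restricted_path)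
  moreover have "walk_in ?T (adj \<phi>) P"
    using walk_in_P by (auto simp: walk_in_def)
  ultimately have "Suc m - k \<le> length (map fst Q)"
    using shortest indices
    by (intro shortest_walk_segment[where T = ?T and E = "adj \<phi>" and P = P]) (auto simp: shortest_path_rel_def)
  then show "length restricted_path \<le> length Q"
    by (simp add: length_restricted_path)
qed

lemma restricted_path_ordered: "ordered_along restr_rep restricted_path (subpath a b g)"
proof (cases "k < m")
  case True
  show ?thesis
  proof (rule ordered_along_subpath[OF ordered params(1) ends_distinct[OF True] params(3)])
    fix i assume "i < length restricted_path"
    then show "k + i < length P \<and> restr_rep (restricted_path ! i) \<subseteq> \<phi> (P ! (k + i))"
      using indices component_subset
      by (simp add: length_restricted_path nth_restricted_path restr_rep_def)
  qed
next
  case False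
  then show ?thesis by (intro ordered_along_length_le_1) (simp add: length_restricted_path)
qed

lemma restricted_path_shortest_curve:
  "shortest_curve_of (restr_V V \<phi> R) restr_rep (restr_D V \<phi> R D) restricted_path (subpath a b g)"
  unfolding shortest_curve_of_iff
proof (intro conjI restricted_path_shortest restricted_path_ordered)
  have image: "path_image (subpath a b g) = g ` {a..b}"
    using params by (simp add: path_image_subpath)
  show "path (subpath a b g)"
    using path_g params by (intro path_subpath) auto
  have "a \<in> piece k" "b \<in> piece m"
    using params start_in finish_in by (simp_all add: piece_def)
  then show "pathstart (subpath a b g) \<in> restr_rep (hd restricted_path)"
    and "pathfinish (subpath a b g) \<in> restr_rep (last restricted_path)"
    using piece_image_subset_component[of k] piece_image_subset_component[of m] indices
    by (auto simp: hd_restricted_path last_restricted_path restr_rep_def)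
  show "path_image (subpath a b g) \<subseteq> \<Union>(restr_rep ` set restricted_path)"
  proof
    fix x assume "x \<in> path_image (subpath a b g)"
    then obtain u where u: "u \<in> {a..b}" and x: "x = g u" using image by blast
    obtain i where i: "k \<le> i" "i \<le> m" "u \<in> piece i" using u by (rule piece_index)
    have "x \<in> restr_rep (P ! i, component i)"
      using piece_image_subset_component[OF i(1,2)] i(3) x by (auto simp: restr_rep_def)
    moreover have "(P ! i, component i) \<in> set restricted_path"
      using i by (simp add: set_restricted_path)
    ultimately show "x \<in> \<Union>(restr_rep ` set restricted_path)" by blast
  qed
  show "\<forall>p\<in>set restricted_path. path_image (subpath a b g) \<inter> restr_rep p \<noteq> {} \<and>
      connected (path_image (subpath a b g) \<inter> restr_rep p)"
  proof
    fix p assume "p \<in> set restricted_path"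
    then obtain i where i: "k \<le> i" "i \<le> m" "p = (P ! i, component i)"
      by (auto simp: set_restricted_path)
    then have "path_image (subpath a b g) \<inter> restr_rep p = g ` piece i"
      using image segment_inter_component by (simp add: restr_rep_def)
    moreover have "path_connected (g ` piece i)"
      using i indices by (intro path_connected_piece_image) simp
    ultimately show "path_image (subpath a b g) \<inter> restr_rep p \<noteq> {} \<and>
        connected (path_image (subpath a b g) \<inter> restr_rep p)"
      using piece_nonempty[OF i(1,2)] by (simp add: path_connected_imp_connected)
  qed
qed

end

theorem lemma10:
  fixes V :: "'v set" and \<phi> :: "'v \<Rightarrow> point set" and D :: "'v set"
    and R :: "point set" and g :: "real \<Rightarrow> point" and a b :: real
  assumes "string_rep V \<phi>"
    and "D \<subseteq> V"
    and "region V \<phi> R"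
    and "shortest_curve_rel V \<phi> D g"
    and "0 \<le> a" and "a \<le> b" and "b \<le> 1"
    and "path_image (subpath a b g) \<subseteq> R"
  shows "shortest_curve_rel (restr_V V \<phi> R) restr_rep (restr_D V \<phi> R D) (subpath a b g)"
proof -
  obtain P where P: "shortest_curve_of V \<phi> D P g"
    using assms(4) by (auto simp: shortest_curve_rel_def)
  then have "set P \<subseteq> V"
    by (simp add: shortest_curve_of_def shortest_path_rel_def walk_in_def)
  then interpret ordered_curve \<phi> P g
    using P string_rep_closed[OF assms(1)] by unfold_locales (auto simp: shortest_curve_of_iff)
  obtain k m where "k \<le> m" "m < length P" "g a \<in> \<phi> (P ! k)" "g b \<in> \<phi> (P ! m)" "k < m \<Longrightarrow> a < b"
    by (rule obtain_end_indices[of a b]) (use assms(5-7) in auto)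
  moreover have "g ` {a..b} \<subseteq> R"
    using assms(6,8) by (simp add: path_image_subpath)
  ultimately interpret restricted_segment \<phi> P g a b k m R V D
    using P assms(2,5-7) by unfold_locales (auto simp: shortest_curve_of_iff)
  show ?thesis
    using restricted_path_shortest_curve by (auto simp: shortest_curve_rel_def)
qed

end
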